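(* Let $G$ be a finite simple graph which is either a tree or a unicyclic graph (a connected graph with exactly one cycle) whose cycle has odd length, and let $\mathcal{N}G$ be its normal graph algebra over a field $\mathbb{F}$ of characteristic not $2$. Then $G$ is edge-square: for every edge $\mathfrak{e}$ of $G$ there exists $u\in U_G$ with $u^2=\mathfrak{e}$.
   Context: For a finite simple graph $G$ with vertex set $VG$ and edge set $EG$ (edge with endpoints $x,y$ written $[x,y]$), the normal graph algebra $\mathcal{N}G$ is the $\mathbb{F}$-vector space $U_G\oplus\mathfrak{Z}_G$, where $U_G$ has basis $VG$ and $\mathfrak{Z}_G$ has basis $EG$, with commutative bilinear product determined by: for distinct vertices $x,y$, $xy=[x,y]$ if adjacent and $0$ otherwise; $x^2=\sum_{y\sim x}[x,y]$; all products involving an element of $\mathfrak{Z}_G$ are $0$. Equivalently, for $u=\sum_x\theta_x x$, $u^2=\sum_{[x,y]\in EG}(\theta_x+\theta_y)^2[x,y]$. *)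

theory Defs
  imports Main
begin

definition simple_graph :: "'a set \<Rightarrow> 'a set set \<Rightarrow> bool" where
  "simple_graph V E \<longleftrightarrow> finite V \<and>
     (\<forall>e\<in>E. \<exists>x y. x \<noteq> y \<and> x \<in> V \<and> y \<in> V \<and> e = {x, y})"

definition adj :: "'a set set \<Rightarrow> 'a \<Rightarrow> 'a \<Rightarrow> bool" where
  "adj E x y \<longleftrightarrow> x \<noteq> y \<and> {x, y} \<in> E"

definition graph_connected :: "'a set \<Rightarrow> 'a set set \<Rightarrow> bool" where
  "graph_connected V E \<longleftrightarrow> V \<noteq> {} \<and> (\<forall>x\<in>V. \<forall>y\<in>V. (adj E)\<^sup>*\<^sup>* x y)"

definition is_cycle_list :: "'a set \<Rightarrow> 'a set set \<Rightarrow> 'a list \<Rightarrow> bool" where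
  "is_cycle_list V E vs \<longleftrightarrow> length vs \<ge> 3 \<and> distinct vs \<and> set vs \<subseteq> V \<and>
     (\<forall>i < length vs. {vs ! i, vs ! ((i + 1) mod length vs)} \<in> E)"

definition cycle_edges :: "'a list \<Rightarrow> 'a set set" where
  "cycle_edges vs = {{vs ! i, vs ! ((i + 1) mod length vs)} | i. i < length vs}"

text \<open>The cycles of G, each identified with its (sub)graph, i.e. its edge set.\<close>
definition graph_cycles :: "'a set \<Rightarrow> 'a set set \<Rightarrow> 'a set set set" where
  "graph_cycles V E = {cycle_edges vs | vs. is_cycle_list V E vs}"

definition is_tree :: "'a set \<Rightarrow> 'a set set \<Rightarrow> bool" where
  "is_tree V E \<longleftrightarrow> graph_connected V E \<and> graph_cycles V E = {}"

definition is_odd_unicyclic :: "'a set \<Rightarrow> 'a set set \<Rightarrow> bool" where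
  "is_odd_unicyclic V E \<longleftrightarrow> graph_connected V E \<and>
     (\<exists>C. graph_cycles V E = {C} \<and> odd (card C))"

text \<open>Square of u = sum_x theta_x x in the normal graph algebra, as coordinate vector
  w.r.t. the edge basis of Z_G: coefficient of edge [x,y] is (theta_x + theta_y)^2.\<close>
definition nsq :: "'a set set \<Rightarrow> ('a \<Rightarrow> 'k::field) \<Rightarrow> 'a set \<Rightarrow> 'k" where
  "nsq E \<theta> e = (if e \<in> E then (\<Sum>x\<in>e. \<theta> x)\<^sup>2 else 0)"

text \<open>G is edge-square over 'k: every basis edge e is u^2 for some u in U_G.\<close>
definition edge_square :: "'k::field itself \<Rightarrow> 'a set \<Rightarrow> 'a set set \<Rightarrow> bool" where
  "edge_square TYPE('k) V E \<longleftrightarrow>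
     (\<forall>e\<in>E. \<exists>\<theta>::'a \<Rightarrow> 'k. (\<forall>x. x \<notin> V \<longrightarrow> \<theta> x = 0) \<and>
        nsq E \<theta> = (\<lambda>f. if f = e then 1 else 0))"

end

theory Submission
  imports Defs
begin

text \<open>
  Fix an edge \<open>e = {x, y}\<close> and let \<open>F = E - {e}\<close>. It suffices to find weights \<open>\<theta>\<close> with
  \<open>\<theta> u + \<theta> w = 0\<close> on every edge of \<open>F\<close> and \<open>\<theta> x + \<theta> y = 1\<close>. If \<open>F\<close> has no odd closed walk
  through \<open>x\<close> and no odd walk from \<open>x\<close> to \<open>y\<close>, the parity of walks from \<open>x\<close> two-colours the
  component of \<open>x\<close> in \<open>F\<close>: put \<open>\<theta> = \<plusminus>c\<close> there and \<open>0\<close> elsewhere, with \<open>c = 1/2\<close> if \<open>y\<close> lies in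
  that component (necessarily with the colour of \<open>x\<close>) and \<open>c = 1\<close> otherwise.

  In a tree or odd unicyclic graph one of the endpoints satisfies this. If \<open>y\<close> is reachable
  from \<open>x\<close> in \<open>F\<close>, a path closes up with \<open>e\<close> to the unique cycle, which is odd, so the path
  has even length and \<open>F\<close> contains no cycle at all. Otherwise an odd closed walk in
  \<open>F\<close> at each endpoint would give two copies of the unique cycle in different components of
  \<open>F\<close>.
\<close>

section \<open>Walks\<close>

lemma simple_graph_subset: "simple_graph V E \<Longrightarrow> F \<subseteq> E \<Longrightarrow> simple_graph V F"
  unfolding simple_graph_def by blast

lemma simple_graph_edge_vertices:
  "simple_graph V E \<Longrightarrow> {x, y} \<in> E \<Longrightarrow> x \<noteq> y \<and> x \<in> V \<and> y \<in> V"
  unfolding simple_graph_def by (metis doubleton_eq_iff)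

definition walk_betw :: "'a set set \<Rightarrow> 'a \<Rightarrow> 'a list \<Rightarrow> 'a \<Rightarrow> bool" where
  "walk_betw F a p b \<longleftrightarrow> p \<noteq> [] \<and> hd p = a \<and> last p = b \<and> successively (\<lambda>u v. {u, v} \<in> F) p"

definition reachable :: "'a set set \<Rightarrow> 'a \<Rightarrow> 'a \<Rightarrow> bool" where
  "reachable F a b \<longleftrightarrow> (\<exists>p. walk_betw F a p b)"

definition odd_walk :: "'a set set \<Rightarrow> 'a \<Rightarrow> 'a \<Rightarrow> bool" where
  "odd_walk F a b \<longleftrightarrow> (\<exists>p. walk_betw F a p b \<and> odd (length p - 1))"

definition even_walk :: "'a set set \<Rightarrow> 'a \<Rightarrow> 'a \<Rightarrow> bool" where
  "even_walk F a b \<longleftrightarrow> (\<exists>p. walk_betw F a p b \<and> even (length p - 1))"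

lemma walk_betw_singleton [simp]: "walk_betw F a [a] a"
  by (simp add: walk_betw_def)

lemma walk_betw_rev: "walk_betw F a p b \<Longrightarrow> walk_betw F b (rev p) a"
  by (simp add: walk_betw_def hd_rev last_rev insert_commute)

lemma successively_append_Cons:
  "successively P (xs @ y # ys) \<longleftrightarrow> successively P (xs @ [y]) \<and> successively P (y # ys)"
  by (auto simp: successively_append_iff)

lemma walk_betw_split:
  "walk_betw F a (xs @ y # ys) b \<longleftrightarrow> walk_betw F a (xs @ [y]) y \<and> walk_betw F y (y # ys) b"
proof -
  have "hd (xs @ y # ys) = hd (xs @ [y])" by (cases xs) simp_all
  then show ?thesis unfolding walk_betw_def successively_append_Cons[of _ xs y ys] by auto
qed

lemma walk_betw_append:
  assumes "walk_betw F a p b" "walk_betw F b q c"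
  shows "walk_betw F a (p @ tl q) c"
proof -
  obtain xs where "p = xs @ [b]"
    using assms(1) unfolding walk_betw_def by (metis append_butlast_last_id)
  moreover obtain ys where "q = b # ys"
    using assms(2) unfolding walk_betw_def by (metis list.collapse)
  ultimately show ?thesis
    using assms walk_betw_split[of F a xs b ys c] by simp
qed

lemma length_append_tl:
  "p \<noteq> [] \<Longrightarrow> q \<noteq> [] \<Longrightarrow> length (p @ tl q) - 1 = (length p - 1) + (length q - 1)"
  by (cases p) auto

lemma walk_betw_snoc: "walk_betw F a p b \<Longrightarrow> {b, c} \<in> F \<Longrightarrow> walk_betw F a (p @ [c]) c"
  using walk_betw_append[of F a p b "[b, c]" c] by (simp add: walk_betw_def)

lemma walk_betw_vertices:
  assumes "simple_graph V F" "a \<in> V" "walk_betw F a p b"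
  shows "set p \<subseteq> V"
proof
  fix z assume "z \<in> set p"
  then obtain j where j: "j < length p" "z = p ! j" by (metis in_set_conv_nth)
  show "z \<in> V"
  proof (cases j)
    case 0
    have "p \<noteq> []" "hd p = a" using assms(3) by (simp_all add: walk_betw_def)
    then show ?thesis using assms(2) j 0 by (simp add: hd_conv_nth)
  next
    case (Suc i)
    then have "{p ! i, z} \<in> F"
      using assms(3) j successively_nth[of "\<lambda>u v. {u, v} \<in> F" p i] by (simp add: walk_betw_def)
    then show ?thesis using simple_graph_edge_vertices[OF assms(1)] by blast
  qed
qed

lemma reachable_if_in_walk:
  assumes "walk_betw F a p b" "z \<in> set p"
  shows "reachable F a z"
proof -
  obtain xs ys where "p = xs @ z # ys" using assms(2) by (meson split_list)
  then show ?thesis using assms(1) walk_betw_split unfolding reachable_def by metis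
qed

lemma reachable_sym: "reachable F a b \<Longrightarrow> reachable F b a"
  using walk_betw_rev reachable_def by metis

lemma reachable_trans: "reachable F a b \<Longrightarrow> reachable F b c \<Longrightarrow> reachable F a c"
  using walk_betw_append reachable_def by metis

lemma walk_betw_remove_loop:
  assumes "walk_betw F a (xs @ y # ys @ y # zs) b"
  shows "walk_betw F y (y # ys @ [y]) y" "walk_betw F a (xs @ y # zs) b"
proof -
  have "walk_betw F a (xs @ [y]) y" "walk_betw F y ((y # ys) @ y # zs) b"
    using assms walk_betw_split[of F a xs y "ys @ y # zs" b] by simp_all
  then show "walk_betw F y (y # ys @ [y]) y" "walk_betw F a (xs @ y # zs) b"
    using walk_betw_split[of F y "y # ys" y zs b] walk_betw_split[of F a xs y zs b] by simp_all
qed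

lemma walk_betw_to_path: "walk_betw F a p b \<Longrightarrow> \<exists>q. walk_betw F a q b \<and> distinct q"
proof (induction "length p" arbitrary: p rule: less_induct)
  case less
  show ?case
  proof (cases "distinct p")
    case False
    then obtain xs y ys zs where p: "p = xs @ y # ys @ y # zs"
      using not_distinct_decomp by fastforce
    then have "walk_betw F a (xs @ y # zs) b"
      using less.prems walk_betw_remove_loop by metis
    then show ?thesis using less.hyps[of "xs @ y # zs"] unfolding p by simp
  qed (use less.prems in blast)
qed

lemma odd_closed_walk_contains_simple:
  assumes "walk_betw F a p a" "odd (length p - 1)"
  shows "\<exists>b q. walk_betw F b q b \<and> odd (length q - 1) \<and> distinct (butlast q) \<and> set q \<subseteq> set p"
  using assms
proof (induction "length p" arbitrary: a p rule: less_induct)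
  case less
  show ?case
  proof (cases "distinct (butlast p)")
    case False
    then obtain xs y ys zs where "butlast p = xs @ y # ys @ y # zs"
      using not_distinct_decomp by fastforce
    moreover have "p = butlast p @ [a]"
      using less.prems(1) unfolding walk_betw_def by (metis append_butlast_last_id)
    ultimately have p: "p = xs @ y # ys @ y # (zs @ [a])" by simp
    let ?loop = "y # ys @ [y]" and ?rest = "xs @ y # zs @ [a]"
    have walks: "walk_betw F y ?loop y" "walk_betw F a ?rest a"
      using walk_betw_remove_loop less.prems(1) unfolding p by (metis, metis append.assoc)
    have "odd (length ?loop - 1) \<or> odd (length ?rest - 1)"
      using less.prems(2) unfolding p by auto
    moreover have "length ?loop < length p" "length ?rest < length p" "set ?loop \<subseteq> set p"
      "set ?rest \<subseteq> set p"
      unfolding p by auto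
    ultimately show ?thesis using less.hyps walks by (meson order_trans)
  qed (use less.prems in blast)
qed

section \<open>Cycles\<close>

lemma cycle_of_simple_odd_closed_walk:
  assumes G: "simple_graph V F" and q: "walk_betw F b q b" "odd (length q - 1)"
    and "distinct (butlast q)" "set q \<subseteq> V"
  shows "is_cycle_list V F (butlast q)"
proof -
  have q_ne: "q \<noteq> []" and hd_q: "hd q = b" and last_q: "last q = b"
    and edges: "successively (\<lambda>u v. {u, v} \<in> F) q"
    using q(1) unfolding walk_betw_def by auto
  have "length q \<noteq> 2"
  proof
    assume "length q = 2"
    then have "q = [b, b]" using hd_q last_q
      by (cases q rule: remdups_adj.cases) auto
    then show False using edges simple_graph_edge_vertices[OF G, of b b] by simp
  qed
  then have len: "length q \<ge> 4" using q(2) by presburger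
  let ?n = "length (butlast q)"
  have "{butlast q ! i, butlast q ! ((i + 1) mod ?n)} \<in> F" if i: "i < ?n" for i
  proof -
    have "butlast q ! ((i + 1) mod ?n) = q ! Suc i"
    proof (cases "i + 1 < ?n")
      case False
      then have "Suc i = length q - 1" using i by simp
      then show ?thesis
        using q_ne hd_q last_q len by (simp add: nth_butlast hd_conv_nth last_conv_nth)
    qed (simp add: nth_butlast)
    then show ?thesis using i successively_nth[OF edges, of i] by (simp add: nth_butlast)
  qed
  then show ?thesis
    using assms len unfolding is_cycle_list_def by (auto dest: in_set_butlastD)
qed

lemma cycle_reachable_from_odd_closed_walk:
  assumes G: "simple_graph V F" and "a \<in> V" "odd_walk F a a"
  shows "\<exists>vs. is_cycle_list V F vs \<and> (\<forall>z \<in> set vs. reachable F a z)"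
proof -
  obtain p where p: "walk_betw F a p a" "odd (length p - 1)"
    using assms(3) unfolding odd_walk_def by blast
  obtain b q where q: "walk_betw F b q b" "odd (length q - 1)" "distinct (butlast q)"
    "set q \<subseteq> set p"
    using odd_closed_walk_contains_simple[OF p] by blast
  moreover have "set p \<subseteq> V" using walk_betw_vertices G assms(2) p(1) .
  ultimately have "is_cycle_list V F (butlast q)"
    using cycle_of_simple_odd_closed_walk[OF G] by blast
  moreover have "reachable F a z" if "z \<in> set (butlast q)" for z
    using that q(4) reachable_if_in_walk[OF p(1)] by (meson in_set_butlastD subsetD)
  ultimately show ?thesis by blast
qed

lemma path_is_cycle_with_closing_edge:
  assumes p: "walk_betw F x p y" "distinct p" and "x \<noteq> y" "{x, y} \<notin> F" "set p \<subseteq> V"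
  shows "is_cycle_list V (insert {x, y} F) p"
proof -
  have p_ne: "p \<noteq> []" and hd_p: "hd p = x" and last_p: "last p = y"
    and edges: "successively (\<lambda>u v. {u, v} \<in> F) p"
    using p(1) unfolding walk_betw_def by auto
  have len: "length p \<ge> 3"
  proof (rule ccontr)
    assume "\<not> length p \<ge> 3"
    then have "length p < 3" by simp
    then have "p = [x] \<or> p = [x, y]" using p_ne hd_p last_p
      by (cases p rule: remdups_adj.cases) auto
    then show False using assms(3,4) edges last_p by (elim disjE) simp_all
  qed
  let ?n = "length p"
  have "{p ! i, p ! ((i + 1) mod ?n)} \<in> insert {x, y} F" if i: "i < ?n" for i
  proof (cases "i + 1 < ?n")
    case True
    then show ?thesis using successively_nth[OF edges, of i] by simp
  next
    case False
    then have "i = ?n - 1" using i by simp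
    then have "{p ! i, p ! ((i + 1) mod ?n)} = {y, x}"
      using p_ne hd_p last_p by (simp add: hd_conv_nth last_conv_nth)
    then show ?thesis by (simp add: insert_commute)
  qed
  then show ?thesis using len assms(2,5) unfolding is_cycle_list_def by simp
qed

lemma last_hd_in_cycle_edges: "vs \<noteq> [] \<Longrightarrow> {last vs, hd vs} \<in> cycle_edges vs"
  unfolding cycle_edges_def
  by (rule CollectI, rule exI[of _ "length vs - 1"]) (simp add: hd_conv_nth last_conv_nth)

lemma cycle_edges_subset: "is_cycle_list V F vs \<Longrightarrow> cycle_edges vs \<subseteq> F"
  unfolding is_cycle_list_def cycle_edges_def by auto

lemma cycle_edges_in_graph_cycles:
  "is_cycle_list V F vs \<Longrightarrow> F \<subseteq> E \<Longrightarrow> cycle_edges vs \<in> graph_cycles V E"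
  unfolding graph_cycles_def is_cycle_list_def by blast

lemma Union_cycle_edges:
  assumes "vs \<noteq> []"
  shows "\<Union> (cycle_edges vs) = set vs"
proof (intro equalityI subsetI)
  have "0 < length vs" using assms by simp
  then show "z \<in> set vs" if "z \<in> \<Union> (cycle_edges vs)" for z
    using that unfolding cycle_edges_def by auto
  show "z \<in> \<Union> (cycle_edges vs)" if "z \<in> set vs" for z
    using that unfolding cycle_edges_def in_set_conv_nth by blast
qed

lemma card_cycle_edges:
  assumes "distinct vs" "length vs \<ge> 3"
  shows "card (cycle_edges vs) = length vs"
proof -
  let ?n = "length vs"
  let ?succ = "\<lambda>i. (i + 1) mod ?n"
  let ?edge = "\<lambda>i. {vs ! i, vs ! ?succ i}"
  have idx: "i = j" if "i < ?n" "j < ?n" "vs ! i = vs ! j" for i j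
    using that assms(1) nth_eq_iff_index_eq by blast
  have "0 < ?n" using assms(2) by linarith
  then have succ_lt: "?succ i < ?n" for i by simp
  have "inj_on ?edge {..<?n}"
  proof
    fix i j assume i: "i \<in> {..<?n}" and j: "j \<in> {..<?n}" and "?edge i = ?edge j"
    then have "i = j \<and> ?succ i = ?succ j \<or> i = ?succ j \<and> ?succ i = j"
      using idx succ_lt by (auto simp: doubleton_eq_iff)
    moreover have "?succ (?succ i) \<noteq> i"
    proof -
      have "?succ (?succ i) = (i + 2) mod ?n" by (metis mod_add_left_eq one_add_one add.assoc)
      moreover have "(i + 2) mod ?n \<noteq> i"
        using i assms(2) by (cases "i + 2 < ?n") (auto simp: mod_if)
      ultimately show ?thesis by simp
    qed
    ultimately show "i = j" by auto
  qed
  moreover have "cycle_edges vs = ?edge ` {..<?n}" unfolding cycle_edges_def by auto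
  ultimately show ?thesis by (simp add: card_image)
qed

section \<open>Two-colouring by walk parity\<close>

lemma even_walk_refl: "even_walk F a a"
  unfolding even_walk_def using walk_betw_singleton by fastforce

lemma odd_walk_sym: "odd_walk F a b \<Longrightarrow> odd_walk F b a"
  unfolding odd_walk_def using walk_betw_rev by fastforce

lemma reachable_if_odd_walk: "odd_walk F a b \<Longrightarrow> reachable F a b"
  unfolding odd_walk_def reachable_def by blast

lemma reachable_in_vertices:
  assumes "simple_graph V F" "a \<in> V" "reachable F a b"
  shows "b \<in> V"
proof -
  obtain p where p: "walk_betw F a p b" using assms(3) unfolding reachable_def by blast
  then have "b \<in> set p" unfolding walk_betw_def by auto
  then show ?thesis using walk_betw_vertices[OF assms(1,2) p] by blast
qed

lemma odd_walk_step:
  assumes "even_walk F a u" "{u, w} \<in> F"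
  shows "odd_walk F a w"
proof -
  obtain p where p: "walk_betw F a p u" "even (length p - 1)"
    using assms(1) unfolding even_walk_def by blast
  then have "odd (length (p @ [w]) - 1)" by (cases p) (simp_all add: walk_betw_def)
  then show ?thesis using walk_betw_snoc[OF p(1) assms(2)] unfolding odd_walk_def by blast
qed

lemma even_walk_step:
  assumes "odd_walk F a u" "{u, w} \<in> F"
  shows "even_walk F a w"
proof -
  obtain p where p: "walk_betw F a p u" "odd (length p - 1)"
    using assms(1) unfolding odd_walk_def by blast
  then have "even (length (p @ [w]) - 1)" by (cases p) (simp_all add: walk_betw_def)
  then show ?thesis using walk_betw_snoc[OF p(1) assms(2)] unfolding even_walk_def by blast
qed

lemma odd_closed_walk_if_even_and_odd_walk:
  assumes "even_walk F a b" "odd_walk F a b"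
  shows "odd_walk F a a"
proof -
  obtain p q where p: "walk_betw F a p b" "even (length p - 1)"
    and q: "walk_betw F a q b" "odd (length q - 1)"
    using assms unfolding even_walk_def odd_walk_def by blast
  have "walk_betw F a (p @ tl (rev q)) a"
    using walk_betw_append[OF p(1) walk_betw_rev[OF q(1)]] .
  moreover have "odd (length (p @ tl (rev q)) - 1)"
    using p q length_append_tl[of p "rev q"] by (simp add: walk_betw_def)
  ultimately show ?thesis unfolding odd_walk_def by blast
qed

definition parity_sign :: "'a set set \<Rightarrow> 'a \<Rightarrow> 'a \<Rightarrow> int" where
  "parity_sign F a v = (if even_walk F a v then 1 else if odd_walk F a v then -1 else 0)"

lemma parity_sign_edge:
  assumes "\<not> odd_walk F a a" and uw: "{u, w} \<in> F"
  shows "parity_sign F a u + parity_sign F a w = 0"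
proof -
  have wu: "{w, u} \<in> F" using uw by (simp add: insert_commute)
  have not_both: "\<not> (even_walk F a v \<and> odd_walk F a v)" for v
    using assms(1) odd_closed_walk_if_even_and_odd_walk[of F a v] by blast
  consider (even) "even_walk F a u" | (odd) "\<not> even_walk F a u" "odd_walk F a u"
    | (neither) "\<not> even_walk F a u" "\<not> odd_walk F a u"
    by blast
  then show ?thesis
  proof cases
    case even
    then have "odd_walk F a w" "\<not> even_walk F a w"
      using odd_walk_step[OF _ uw] not_both by blast+
    then show ?thesis using even unfolding parity_sign_def by simp
  next
    case odd
    then have "even_walk F a w" using even_walk_step[OF _ uw] by blast
    then show ?thesis using odd unfolding parity_sign_def by simp
  next
    case neither
    then have "\<not> even_walk F a w" "\<not> odd_walk F a w"
      using odd_walk_step[OF _ wu] even_walk_step[OF _ wu] by blast+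
    then show ?thesis using neither unfolding parity_sign_def by simp
  qed
qed

lemma parity_sign_eq_0_outside:
  "simple_graph V F \<Longrightarrow> a \<in> V \<Longrightarrow> v \<notin> V \<Longrightarrow> parity_sign F a v = 0"
  unfolding parity_sign_def even_walk_def odd_walk_def
  using reachable_in_vertices reachable_def by fastforce

lemma two_neq_zero_if_CHAR_neq_2: "CHAR('k::field) \<noteq> 2 \<Longrightarrow> (2::'k) \<noteq> 0"
proof
  assume "CHAR('k) \<noteq> 2" "(2::'k) = 0"
  then have "CHAR('k) dvd 2" using of_nat_eq_0_iff_char_dvd[where 'a='k, of 2] by simp
  moreover from this have "CHAR('k) \<le> 2" by (rule dvd_imp_le) simp
  ultimately show False using \<open>CHAR('k) \<noteq> 2\<close> CHAR_not_1[where 'a='k] by (cases "CHAR('k)") auto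
qed

lemma nsq_doubleton: "u \<noteq> w \<Longrightarrow> {u, w} \<in> E \<Longrightarrow> nsq E \<theta> {u, w} = (\<theta> u + \<theta> w)\<^sup>2"
  by (simp add: nsq_def)

lemma edge_square_witness:
  assumes G: "simple_graph V E" and e: "{x, y} \<in> E" and char: "CHAR('k::field) \<noteq> 2"
    and no_odd: "\<not> odd_walk (E - {{x, y}}) x x" "\<not> odd_walk (E - {{x, y}}) x y"
  shows "\<exists>\<theta>::'a \<Rightarrow> 'k. (\<forall>v. v \<notin> V \<longrightarrow> \<theta> v = 0) \<and>
    nsq E \<theta> = (\<lambda>f. if f = {x, y} then 1 else 0)"
proof -
  define F where "F = E - {{x, y}}"
  define c :: 'k where "c = (if even_walk F x y then 1 / 2 else 1)"
  define \<theta> :: "'a \<Rightarrow> 'k" where "\<theta> v = c * of_int (parity_sign F x v)" for v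
  have xV: "x \<in> V" using simple_graph_edge_vertices[OF G e] by blast
  have "simple_graph V F" using simple_graph_subset[OF G] unfolding F_def by blast
  then have outside: "\<forall>v. v \<notin> V \<longrightarrow> \<theta> v = 0"
    unfolding \<theta>_def using parity_sign_eq_0_outside xV by fastforce
  have on_e: "\<theta> x + \<theta> y = 1"
    using no_odd(2) even_walk_refl two_neq_zero_if_CHAR_neq_2[OF char]
    unfolding \<theta>_def c_def parity_sign_def F_def by (simp add: field_simps)
  have off_e: "\<theta> u + \<theta> w = 0" if "{u, w} \<in> F" for u w
  proof -
    have "\<theta> u + \<theta> w = c * of_int (parity_sign F x u + parity_sign F x w)"
      unfolding \<theta>_def by (simp add: distrib_left)
    then show ?thesis using parity_sign_edge[OF no_odd(1)[folded F_def] that] by simp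
  qed
  have "nsq E \<theta> f = (if f = {x, y} then 1 else 0)" for f
  proof (cases "f \<in> E")
    case True
    then obtain u w where f: "f = {u, w}" "u \<noteq> w" using G unfolding simple_graph_def by blast
    then have "nsq E \<theta> f = (\<theta> u + \<theta> w)\<^sup>2" using nsq_doubleton[of u w E \<theta>] \<open>f \<in> E\<close> by simp
    moreover have "\<theta> u + \<theta> w = (if f = {x, y} then 1 else 0)"
    proof (cases "f = {x, y}")
      case True
      then have "\<theta> u + \<theta> w = \<theta> x + \<theta> y" using f by (auto simp: doubleton_eq_iff add.commute)
      then show ?thesis using True on_e by simp
    next
      case False
      then show ?thesis using \<open>f \<in> E\<close> f off_e unfolding F_def by simp
    qed
    ultimately show ?thesis by (cases "f = {x, y}") simp_all
  qed (use e in \<open>auto simp: nsq_def\<close>)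
  then show ?thesis using outside by blast
qed

section \<open>Trees and odd unicyclic graphs\<close>

lemma graph_cycles_eq_odd_singleton:
  "is_tree V E \<or> is_odd_unicyclic V E \<Longrightarrow> C \<in> graph_cycles V E \<Longrightarrow>
    graph_cycles V E = {C} \<and> odd (card C)"
  unfolding is_tree_def is_odd_unicyclic_def by auto

lemma no_odd_walks_if_reachable:
  assumes G: "simple_graph V E" "is_tree V E \<or> is_odd_unicyclic V E" and e: "{x, y} \<in> E"
    and "reachable (E - {{x, y}}) x y"
  shows "\<not> odd_walk (E - {{x, y}}) x x \<and> \<not> odd_walk (E - {{x, y}}) x y"
proof -
  define F where "F = E - {{x, y}}"
  have GF: "simple_graph V F" using simple_graph_subset[OF G(1)] unfolding F_def by blast
  have xy: "x \<noteq> y" "x \<in> V" using simple_graph_edge_vertices[OF G(1) e] by blast+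
  obtain p0 where p0: "walk_betw F x p0 y" using assms(4) unfolding reachable_def F_def by blast
  obtain p where p: "walk_betw F x p y" "distinct p" using walk_betw_to_path[OF p0] by blast
  have "insert {x, y} F = E" using e unfolding F_def by blast
  then have cyc: "is_cycle_list V E p"
    using path_is_cycle_with_closing_edge[OF p xy(1)] walk_betw_vertices[OF GF xy(2) p(1)]
    unfolding F_def by simp
  then have C: "graph_cycles V E = {cycle_edges p}" "odd (card (cycle_edges p))"
    using graph_cycles_eq_odd_singleton[OF G(2)] cycle_edges_in_graph_cycles[of V E p E] by blast+
  have "{y, x} \<in> cycle_edges p"
    using last_hd_in_cycle_edges[of p] p(1) unfolding walk_betw_def by auto
  then have xy_on_cycle: "{x, y} \<in> cycle_edges p" by (simp add: insert_commute)
  have no_xx: "\<not> odd_walk F x x"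
  proof
    assume "odd_walk F x x"
    then obtain vs where vs: "is_cycle_list V F vs"
      using cycle_reachable_from_odd_closed_walk[OF GF xy(2)] by blast
    have "F \<subseteq> E" unfolding F_def by blast
    with vs have "cycle_edges vs = cycle_edges p"
      using cycle_edges_in_graph_cycles C(1) by (metis singletonD)
    then have "{x, y} \<in> F" using cycle_edges_subset[OF vs] xy_on_cycle by blast
    then show False unfolding F_def by simp
  qed
  have "odd (length p)"
    using C(2) card_cycle_edges[OF p(2)] cyc unfolding is_cycle_list_def by simp
  then have "even_walk F x y" using p(1) unfolding even_walk_def by fastforce
  then have "\<not> odd_walk F x y" using no_xx odd_closed_walk_if_even_and_odd_walk[of F x y] by blast
  then show ?thesis using no_xx unfolding F_def by blast
qed

lemma reachable_if_odd_closed_walks: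
  assumes G: "simple_graph V E" "is_tree V E \<or> is_odd_unicyclic V E" and "F \<subseteq> E"
    and "x \<in> V" "y \<in> V" "odd_walk F x x" "odd_walk F y y"
  shows "reachable F x y"
proof -
  have GF: "simple_graph V F" using simple_graph_subset[OF G(1) assms(3)] .
  obtain vs ws where vs: "is_cycle_list V F vs" "\<forall>z \<in> set vs. reachable F x z"
    and ws: "is_cycle_list V F ws" "\<forall>z \<in> set ws. reachable F y z"
    using cycle_reachable_from_odd_closed_walk[OF GF] assms(4-7) by metis
  have "cycle_edges vs = cycle_edges ws"
    using graph_cycles_eq_odd_singleton[OF G(2)] cycle_edges_in_graph_cycles[OF _ assms(3)] vs(1) ws(1)
    by blast
  moreover have "vs \<noteq> []" "ws \<noteq> []" using vs(1) ws(1) unfolding is_cycle_list_def by auto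
  ultimately have "set vs = set ws" using Union_cycle_edges by metis
  then obtain z where "reachable F x z" "reachable F y z"
    using vs(2) ws(2) \<open>vs \<noteq> []\<close> by (metis list.set_intros(1) neq_Nil_conv)
  then show ?thesis by (rule reachable_trans[OF _ reachable_sym])
qed

lemma no_odd_walks_at_an_endpoint:
  assumes "simple_graph V E" "is_tree V E \<or> is_odd_unicyclic V E" "{x, y} \<in> E"
  shows "\<not> odd_walk (E - {{x, y}}) x y \<and>
    (\<not> odd_walk (E - {{x, y}}) x x \<or> \<not> odd_walk (E - {{x, y}}) y y)"
proof (cases "reachable (E - {{x, y}}) x y")
  case True
  then show ?thesis using no_odd_walks_if_reachable[OF assms] by blast
next
  case False
  have "x \<in> V" "y \<in> V" using simple_graph_edge_vertices[OF assms(1,3)] by blast+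
  then have "\<not> (odd_walk (E - {{x, y}}) x x \<and> odd_walk (E - {{x, y}}) y y)"
    using False reachable_if_odd_closed_walks[OF assms(1,2) Diff_subset] by blast
  moreover have "\<not> odd_walk (E - {{x, y}}) x y" using False by (metis reachable_if_odd_walk)
  ultimately show ?thesis by blast
qed

theorem proposition6p2:
  fixes V :: "'a set" and E :: "'a set set"
  assumes "simple_graph V E"
    and "is_tree V E \<or> is_odd_unicyclic V E"
    and "CHAR('k::field) \<noteq> 2"
  shows "edge_square TYPE('k) V E"
  unfolding edge_square_def
proof
  fix e assume "e \<in> E"
  then obtain x y where e: "e = {x, y}" "e \<in> E" using assms(1) unfolding simple_graph_def by blast
  then have yx: "e = {y, x}" by (simp add: insert_commute)
  have "\<not> odd_walk (E - {e}) x y" "\<not> odd_walk (E - {e}) x x \<or> \<not> odd_walk (E - {e}) y y"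
    using no_odd_walks_at_an_endpoint[OF assms(1,2)] e by blast+
  then show "\<exists>\<theta>::'a \<Rightarrow> 'k. (\<forall>v. v \<notin> V \<longrightarrow> \<theta> v = 0) \<and>
      nsq E \<theta> = (\<lambda>f. if f = e then 1 else 0)"
    using edge_square_witness[OF assms(1) _ assms(3), of x y]
      edge_square_witness[OF assms(1) _ assms(3), of y x] odd_walk_sym e yx by metis
qed

end
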